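(* Let $L>0$ and let $f:\mathbb{R}\times\mathbb{R}\to\mathbb{R}$ be continuous, $L$-periodic in the first argument, and continuously differentiable in the second argument. Let $\phi:[x_0,+\infty)\to\mathbb{R}$ be a bounded solution of $\phi_{xx}=f(x,\phi)$, and assume $$\min_{x\in[0,L],\ y\in[\inf_{x\ge x_0}\phi(x),\,\sup_{x\ge x_0}\phi(x)]}\frac{\partial f(x,y)}{\partial y}>0 .$$ Then there exists an $L$-periodic solution $\varphi$ of $\varphi_{xx}=f(x,\varphi)$ such that $$\lim_{x\to+\infty}\big(|\phi(x)-\varphi(x)|+|\phi_x(x)-\varphi_x(x)|\big)=0 .$$ *)

theory Defs
  imports "HOL-Analysis.Analysis"
begin

end

theory Submission
  imports Defs
begin

(*
  Let a and b be the infimum and supremum of phi, and 0 < m <= f_y <= M on R x [a, b]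
  (by periodicity the bounds over [0, L] x [a, b] hold everywhere).  The period defect
  w(t) = phi(t + L) - phi(t) satisfies w'' = c(t) w with c >= m, so a maximum principle
  bounds |w| by (b - a) exp(-sqrt m (t - x0)), and an interpolation inequality on unit
  intervals transfers this decay to w'.  Hence phi(x + nL) and phi'(x + nL) converge
  geometrically fast and uniformly in x to L-periodic functions psi and psi'; uniform
  convergence of the derivatives makes psi a solution, and the convergence rate gives
  the asymptotics.
*)

section \<open>Periodic functions\<close>

lemma periodic_add_int_mult:
  fixes g :: "real \<Rightarrow> 'a"
  assumes "\<And>x. g (x + L) = g x"
  shows "g (x + of_int k * L) = g x"
proof -
  have nat: "g (x + real n * L) = g x" for x n
  proof (induction n)
    case (Suc n)
    have "x + real (Suc n) * L = (x + real n * L) + L" by (simp add: algebra_simps)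
    then show ?case using Suc assms by (simp only:)
  qed simp
  show ?thesis
  proof (cases "k \<ge> 0")
    case True
    then show ?thesis using nat[of x "nat k"] by simp
  next
    case False
    then show ?thesis using nat[of "x + of_int k * L" "nat (- k)"] by simp
  qed
qed

lemma periodic_value_in_period:
  fixes g :: "real \<Rightarrow> 'a"
  assumes "L > 0" "\<And>x. g (x + L) = g x"
  shows "\<exists>x'\<in>{0..L}. g x' = g x"
proof
  define k where "k = \<lfloor>x / L\<rfloor>"
  have "of_int k * L \<le> x" "x < (of_int k + 1) * L"
    using assms(1) floor_divide_lower floor_divide_upper unfolding k_def by auto
  then show "x - of_int k * L \<in> {0..L}" by (simp add: algebra_simps)
  show "g (x - of_int k * L) = g x"
    using periodic_add_int_mult[where g=g, OF assms(2), of "x - of_int k * L" k] by simp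
qed

lemma periodic_has_real_derivative:
  fixes g g' :: "real \<Rightarrow> real"
  assumes "L > 0" "\<And>x. g (x + L) = g x" "\<And>x. g' (x + L) = g' x"
    and "\<And>x. x > x0 \<Longrightarrow> (g has_real_derivative g' x) (at x)"
  shows "(g has_real_derivative g' x) (at x)"
proof -
  obtain n :: nat where "x0 - x < real n * L"
    using reals_Archimedean3[OF assms(1)] by blast
  then have "((\<lambda>y. g (y + real n * L)) has_real_derivative g' (x + real n * L)) (at x)"
    using assms(4)[of "x + real n * L"] by (simp add: DERIV_shift)
  then show ?thesis
    using periodic_add_int_mult[where g=g, OF assms(2), of _ "int n"]
      periodic_add_int_mult[where g=g', OF assms(3), of _ "int n"]
    by simp
qed

lemma periodic_in_fst_bounds:
  fixes g :: "real \<Rightarrow> real \<Rightarrow> real"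
  assumes "L > 0" and cont: "continuous_on UNIV (\<lambda>(x, y). g x y)"
    and periodic: "\<And>x y. g (x + L) y = g x y" and "y \<in> {a..b}"
  shows "(INF p \<in> {0..L} \<times> {a..b}. g (fst p) (snd p)) \<le> g x y"
    and "g x y \<le> (SUP p \<in> {0..L} \<times> {a..b}. g (fst p) (snd p))"
proof -
  obtain x' where x': "x' \<in> {0..L}" "g x' y = g x y"
    using periodic_value_in_period[of L "\<lambda>x. g x y"] assms(1) periodic by blast
  have "compact ((\<lambda>p. g (fst p) (snd p)) ` ({0..L} \<times> {a..b}))"
    using cont by (intro compact_continuous_image compact_Times compact_Icc)
      (auto simp: case_prod_beta' intro: continuous_on_subset)
  then have "bounded ((\<lambda>p. g (fst p) (snd p)) ` ({0..L} \<times> {a..b}))"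
    by (rule compact_imp_bounded)
  moreover have "(x', y) \<in> {0..L} \<times> {a..b}" using x' \<open>y \<in> {a..b}\<close> by simp
  ultimately show "(INF p \<in> {0..L} \<times> {a..b}. g (fst p) (snd p)) \<le> g x y"
    and "g x y \<le> (SUP p \<in> {0..L} \<times> {a..b}. g (fst p) (snd p))"
    using x'(2)
    by (force intro: cINF_lower2 cSUP_upper2 bounded_imp_bdd_below bounded_imp_bdd_above)+
qed

lemma mvt_with_derivative_bounds:
  fixes g g' :: "real \<Rightarrow> real"
  assumes "\<And>y. y \<in> {a..b} \<Longrightarrow> (g has_real_derivative g' y) (at y)"
    and "\<And>y. y \<in> {a..b} \<Longrightarrow> lo \<le> g' y \<and> g' y \<le> hi"
    and "y1 \<in> {a..b}" "y2 \<in> {a..b}"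
  shows "\<exists>c. lo \<le> c \<and> c \<le> hi \<and> g y1 - g y2 = c * (y1 - y2)"
proof -
  have *: "\<exists>c. lo \<le> c \<and> c \<le> hi \<and> g v - g u = c * (v - u)"
    if "u \<in> {a..b}" "v \<in> {a..b}" "u < v" for u v
  proof -
    have "(g has_real_derivative g' y) (at y)" if "u \<le> y" "y \<le> v" for y
      using assms(1) \<open>u \<in> {a..b}\<close> \<open>v \<in> {a..b}\<close> that by auto
    then obtain z where "u < z" "z < v" "g v - g u = (v - u) * g' z"
      using MVT2[OF \<open>u < v\<close>] by blast
    then show ?thesis using assms(2)[of z] that by (intro exI[of _ "g' z"]) auto
  qed
  consider "y1 = y2" | "y2 < y1" | "y1 < y2" by linarith
  then show ?thesis
  proof cases
    case 1 then show ?thesis using assms(2)[OF assms(3)] by auto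
  next
    case 2 then show ?thesis using *[of y2 y1] assms(3,4) by auto
  next
    case 3 then show ?thesis using *[of y1 y2] assms(3,4) by (auto simp: algebra_simps)
  qed
qed

lemma difference_quotient_bounds_periodic:
  fixes f fy :: "real \<Rightarrow> real \<Rightarrow> real"
  assumes "L > 0"
    and f_periodic: "\<And>x y. f (x + L) y = f x y"
    and f_deriv_y: "\<And>x y. ((\<lambda>y. f x y) has_real_derivative fy x y) (at y)"
    and fy_cont: "continuous_on UNIV (\<lambda>(x, y). fy x y)"
    and "y1 \<in> {a..b}" "y2 \<in> {a..b}"
  shows "\<exists>c. (INF p \<in> {0..L} \<times> {a..b}. fy (fst p) (snd p)) \<le> c
           \<and> c \<le> (SUP p \<in> {0..L} \<times> {a..b}. fy (fst p) (snd p))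
           \<and> f x y1 - f x y2 = c * (y1 - y2)"
proof (rule mvt_with_derivative_bounds[OF f_deriv_y _ assms(5,6)])
  have fy_periodic: "fy (x + L) y = fy x y" for x y
  proof -
    have "((\<lambda>y. f x y) has_real_derivative fy (x + L) y) (at y)"
      using f_deriv_y[of "x + L" y] by (simp add: f_periodic)
    then show ?thesis using f_deriv_y DERIV_unique by blast
  qed
  note bounds = periodic_in_fst_bounds[OF \<open>L > 0\<close> fy_cont fy_periodic]
  show "(INF p \<in> {0..L} \<times> {a..b}. fy (fst p) (snd p)) \<le> fy x y
      \<and> fy x y \<le> (SUP p \<in> {0..L} \<times> {a..b}. fy (fst p) (snd p))" if "y \<in> {a..b}" for y
    using bounds[OF that] by simp
qed

section \<open>Limits of sequences of functions\<close>

lemma convergent_geometric_increments: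
  fixes s :: "nat \<Rightarrow> real"
  assumes "0 \<le> q" "q < 1" and incr: "\<And>j. \<bar>s (Suc j) - s j\<bar> \<le> C * q ^ j"
  shows "\<exists>l. s \<longlonglongrightarrow> l \<and> \<bar>l - s 0\<bar> \<le> C / (1 - q)"
proof -
  define d where "d j = s (Suc j) - s j" for j
  have geom: "(\<lambda>j. C * q ^ j) sums (C / (1 - q))"
    using sums_mult[OF geometric_sums[of q]] assms(1,2) by (simp add: field_simps)
  have abs_d: "summable (\<lambda>j. \<bar>d j\<bar>)"
    by (rule summable_comparison_test'[OF sums_summable[OF geom]]) (use incr in \<open>auto simp: d_def\<close>)
  have "(\<lambda>n. s 0 + (\<Sum>j<n. d j)) \<longlonglongrightarrow> s 0 + suminf d"
    using summable_rabs_cancel[OF abs_d] by (intro tendsto_add tendsto_const summable_LIMSEQ)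
  moreover have "s 0 + (\<Sum>j<n. d j) = s n" for n
    unfolding d_def sum_lessThan_telescope by simp
  moreover have "\<bar>suminf d\<bar> \<le> C / (1 - q)"
  proof -
    have "\<bar>suminf d\<bar> \<le> (\<Sum>j. \<bar>d j\<bar>)" by (rule summable_rabs[OF abs_d])
    also have "\<dots> \<le> (\<Sum>j. C * q ^ j)"
      by (rule suminf_le[OF _ abs_d sums_summable[OF geom]]) (use incr in \<open>simp add: d_def\<close>)
    finally show ?thesis using sums_unique[OF geom] by simp
  qed
  ultimately show ?thesis by (intro exI[of _ "s 0 + suminf d"]) auto
qed

lemma uniform_limit_by_null_majorant:
  assumes "\<And>n x. x \<in> S \<Longrightarrow> dist (f n x) (g x) \<le> c n" and "c \<longlonglongrightarrow> 0"
  shows "uniform_limit S f g sequentially"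
proof (rule uniform_limitI)
  fix e :: real assume "e > 0"
  then have "\<forall>\<^sub>F n in sequentially. c n < e"
    using order_tendstoD(2)[OF assms(2)] by blast
  then show "\<forall>\<^sub>F n in sequentially. \<forall>x\<in>S. dist (f n x) (g x) < e"
    by eventually_elim (use assms(1) in \<open>blast intro: le_less_trans\<close>)
qed

lemma uniform_limit_lipschitz_compose:
  fixes h :: "'a \<Rightarrow> 'b::metric_space \<Rightarrow> 'c::metric_space"
  assumes ul: "uniform_limit S g l F"
    and lipschitz: "\<And>x u v. x \<in> S \<Longrightarrow> u \<in> Y \<Longrightarrow> v \<in> Y \<Longrightarrow> dist (h x u) (h x v) \<le> M * dist u v"
    and "\<forall>\<^sub>F n in F. \<forall>x\<in>S. g n x \<in> Y" and "\<And>x. x \<in> S \<Longrightarrow> l x \<in> Y"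
  shows "uniform_limit S (\<lambda>n x. h x (g n x)) (\<lambda>x. h x (l x)) F"
proof (rule uniform_limitI)
  fix e :: real assume "e > 0"
  define \<delta> where "\<delta> = e / (\<bar>M\<bar> + 1)"
  have "\<delta> > 0" using \<open>e > 0\<close> by (simp add: \<delta>_def add_nonneg_pos)
  have close: "dist (h x u) (h x v) < e" if "x \<in> S" "u \<in> Y" "v \<in> Y" "dist u v < \<delta>" for x u v
  proof -
    have "dist (h x u) (h x v) \<le> \<bar>M\<bar> * dist u v"
      using lipschitz[OF that(1-3)] by (smt (verit) abs_ge_self mult_right_mono zero_le_dist)
    also have "\<dots> \<le> \<bar>M\<bar> * \<delta>" using that(4) by (simp add: mult_left_mono)
    also have "\<dots> < (\<bar>M\<bar> + 1) * \<delta>" using \<open>\<delta> > 0\<close> by simp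
    finally show ?thesis by (simp add: \<delta>_def)
  qed
  show "\<forall>\<^sub>F n in F. \<forall>x\<in>S. dist (h x (g n x)) (h x (l x)) < e"
    using uniform_limitD[OF ul \<open>\<delta> > 0\<close>] assms(3)
    by eventually_elim (use close assms(4) in blast)
qed

lemma has_real_derivative_uniform_limit:
  fixes f f' :: "nat \<Rightarrow> real \<Rightarrow> real"
  assumes "open S" "convex S"
    and deriv: "\<And>n x. x \<in> S \<Longrightarrow> (f n has_real_derivative f' n x) (at x)"
    and unif: "uniform_limit S f' g' sequentially"
    and lim: "\<And>x. x \<in> S \<Longrightarrow> (\<lambda>n. f n x) \<longlonglongrightarrow> g x"
    and "x \<in> S"
  shows "(g has_real_derivative g' x) (at x)"
proof -
  have "\<exists>h. \<forall>y\<in>S. (\<lambda>n. f n y) \<longlonglongrightarrow> h y \<and> (h has_derivative (*) (g' y)) (at y within S)"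
  proof (rule has_derivative_sequence[where f'="\<lambda>n y. (*) (f' n y)"])
    show "(f n has_derivative (*) (f' n y)) (at y within S)" if "y \<in> S" for n y
      using deriv[OF that] by (simp add: has_field_derivative_def has_derivative_at_withinI)
    show "\<forall>\<^sub>F n in sequentially. \<forall>y\<in>S. \<forall>h. norm (f' n y * h - g' y * h) \<le> e * norm h"
      if "e > 0" for e
    proof -
      have *: "norm (f' n y * h - g' y * h) \<le> e * norm h" if "dist (f' n y) (g' y) < e" for n y h
        using that by (simp add: dist_real_def abs_mult mult_right_mono flip: left_diff_distrib)
      show ?thesis
        using uniform_limitD[OF unif \<open>e > 0\<close>] by eventually_elim (use * in blast)
    qed
  qed (use assms(2,6) lim in blast)+
  then obtain h where h: "\<And>y. y \<in> S \<Longrightarrow> (\<lambda>n. f n y) \<longlonglongrightarrow> h y"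
    and dh: "(h has_real_derivative g' x) (at x within S)"
    using \<open>x \<in> S\<close> by (auto simp: has_field_derivative_def)
  have "(h has_real_derivative g' x) (at x)"
    using dh at_within_open[OF \<open>x \<in> S\<close> \<open>open S\<close>] by simp
  moreover have "h y = g y" if "y \<in> S" for y
    using LIMSEQ_unique[OF h lim] that by blast
  ultimately show ?thesis
    using has_field_derivative_transform_within_open[OF _ \<open>open S\<close> \<open>x \<in> S\<close>] by blast
qed

section \<open>Exponential decay of the period defect\<close>

lemma not_local_max_of_second_derivative_pos:
  fixes z z1 :: "real \<Rightarrow> real"
  assumes "s < b" "continuous_on {s..b} z"
    and deriv: "\<And>t. s < t \<Longrightarrow> t < b \<Longrightarrow> (z has_real_derivative z1 t) (at t)"
    and "(z1 has_real_derivative z2) (at s)" "z2 > 0" "z1 s = 0"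
  shows "\<exists>t\<in>{s<..b}. z t > z s"
proof -
  obtain d where "d > 0" and z1_pos: "\<And>h. 0 < h \<Longrightarrow> h < d \<Longrightarrow> z1 s < z1 (s + h)"
    using DERIV_pos_inc_right[OF assms(4,5)] by blast
  define t where "t = s + min (d / 2) (b - s)"
  have t: "s < t" "t \<le> b" "t < s + d" using \<open>d > 0\<close> \<open>s < b\<close> by (auto simp: t_def)
  obtain l r where r: "s < r" "r < t"
    and "(z has_real_derivative l) (at r)" "z t - z s = (t - s) * l"
    using MVT[of s t z] t continuous_on_subset[OF assms(2), of "{s..t}"] deriv
    by (fastforce simp: real_differentiable_def)
  moreover have "l = z1 r" using DERIV_unique[OF calculation(3) deriv] r t by auto
  moreover have "z1 r > 0" using z1_pos[of "r - s"] r t \<open>z1 s = 0\<close> by auto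
  ultimately have "z t - z s > 0" using t by simp
  then show ?thesis using t by auto
qed

lemma maximum_principle_nonpos:
  fixes z z1 z2 :: "real \<Rightarrow> real"
  assumes "continuous_on {a..b} z" "z a \<le> 0" "z b \<le> 0"
    and deriv: "\<And>t. a < t \<Longrightarrow> t < b \<Longrightarrow> (z has_real_derivative z1 t) (at t)"
    and deriv2: "\<And>t. a < t \<Longrightarrow> t < b \<Longrightarrow> (z1 has_real_derivative z2 t) (at t)"
    and convex: "\<And>t. a < t \<Longrightarrow> t < b \<Longrightarrow> z t > 0 \<Longrightarrow> z2 t > 0"
    and "t \<in> {a..b}"
  shows "z t \<le> 0"
proof (rule ccontr)
  assume "\<not> z t \<le> 0"
  obtain s where s: "s \<in> {a..b}" and max: "\<And>y. y \<in> {a..b} \<Longrightarrow> z y \<le> z s"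
    using continuous_attains_sup[OF compact_Icc _ assms(1)] \<open>t \<in> {a..b}\<close> by auto
  have "z s > 0" using max[OF \<open>t \<in> {a..b}\<close>] \<open>\<not> z t \<le> 0\<close> by linarith
  then have "a < s" "s < b" using s assms(2,3) by (auto simp: order.order_iff_strict)
  have "z1 s = 0"
    by (rule DERIV_local_max[OF deriv[OF \<open>a < s\<close> \<open>s < b\<close>], of "min (s - a) (b - s)"])
      (use \<open>a < s\<close> \<open>s < b\<close> max in \<open>auto simp: dist_real_def abs_less_iff\<close>)
  then obtain y where "y \<in> {s<..b}" "z y > z s"
    using not_local_max_of_second_derivative_pos[OF \<open>s < b\<close> continuous_on_subset[OF assms(1)] deriv
        deriv2 convex] \<open>a < s\<close> \<open>s < b\<close> \<open>z s > 0\<close> by force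
  then show False using max[of y] s by auto
qed

context
  fixes m B x0 :: real and u u1 u2 :: "real \<Rightarrow> real"
  assumes m_pos: "m > 0" and B_nonneg: "B \<ge> 0"
    and cont: "continuous_on {x0..} u"
    and deriv: "\<And>t. t > x0 \<Longrightarrow> (u has_real_derivative u1 t) (at t)"
    and deriv2: "\<And>t. t > x0 \<Longrightarrow> (u1 has_real_derivative u2 t) (at t)"
    and bound: "\<And>t. t \<ge> x0 \<Longrightarrow> u t \<le> B"
    and sub: "\<And>t. t > x0 \<Longrightarrow> u t > 0 \<Longrightarrow> u2 t \<ge> m * u t"
begin

text \<open>The growing barrier term makes the comparison function negative far out, so the
  maximum principle applies on a bounded interval.\<close>

lemma subsolution_le_barrier:
  assumes "\<epsilon> > 0" "t \<ge> x0"
  shows "u t \<le> B * exp (- sqrt m * (t - x0)) + \<epsilon> * exp (sqrt m * (t - x0))"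
proof -
  define \<alpha> where "\<alpha> = sqrt m"
  have "\<alpha> > 0" "\<alpha> * \<alpha> = m" using m_pos by (auto simp: \<alpha>_def)
  define z where "z y = u y - B * exp (- \<alpha> * (y - x0)) - \<epsilon> * exp (\<alpha> * (y - x0))" for y
  define z1 where "z1 y = u1 y + \<alpha> * B * exp (- \<alpha> * (y - x0)) - \<alpha> * \<epsilon> * exp (\<alpha> * (y - x0))" for y
  define z2 where "z2 y = u2 y - m * B * exp (- \<alpha> * (y - x0)) - m * \<epsilon> * exp (\<alpha> * (y - x0))" for y
  define T where "T = max t (x0 + B / (\<epsilon> * \<alpha>) + 1)"
  have "T \<ge> x0" "t \<in> {x0..T}" using \<open>t \<ge> x0\<close> by (auto simp: T_def)
  have "B / \<epsilon> < \<alpha> * (B / (\<epsilon> * \<alpha>) + 1)" using \<open>\<alpha> > 0\<close> \<open>\<epsilon> > 0\<close> by (simp add: field_simps)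
  also have "\<dots> \<le> \<alpha> * (T - x0)" using \<open>\<alpha> > 0\<close> by (intro mult_left_mono) (auto simp: T_def)
  also have "\<dots> < exp (\<alpha> * (T - x0))" using exp_ge_add_one_self[of "\<alpha> * (T - x0)"] by linarith
  finally have "B < \<epsilon> * exp (\<alpha> * (T - x0))" using \<open>\<epsilon> > 0\<close> by (simp add: field_simps)
  moreover have "B * exp (- \<alpha> * (T - x0)) \<ge> 0" using B_nonneg by simp
  ultimately have zT: "z T \<le> 0" using bound[OF \<open>T \<ge> x0\<close>] unfolding z_def by linarith
  have zx0: "z x0 \<le> 0" using bound[of x0] \<open>\<epsilon> > 0\<close> by (simp add: z_def)
  have cont_z: "continuous_on {x0..T} z"
    unfolding z_def by (intro continuous_intros continuous_on_subset[OF cont]) auto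
  have dz: "(z has_real_derivative z1 y) (at y)" if "y > x0" for y
    unfolding z_def z1_def
    by (rule derivative_eq_intros deriv[OF that] refl)+ (simp add: algebra_simps)
  have dz1: "(z1 has_real_derivative z2 y) (at y)" if "y > x0" for y
    unfolding z1_def z2_def
    by (rule derivative_eq_intros deriv2[OF that] refl)+ (simp add: algebra_simps flip: \<open>\<alpha> * \<alpha> = m\<close>)
  have z2_pos: "z2 y > 0" if "y > x0" "z y > 0" for y
  proof -
    have "B * exp (- \<alpha> * (y - x0)) + \<epsilon> * exp (\<alpha> * (y - x0)) > 0"
      using \<open>\<epsilon> > 0\<close> B_nonneg by (simp add: add_nonneg_pos)
    then have "u y > 0" using \<open>z y > 0\<close> by (simp add: z_def)
    then have "z2 y \<ge> m * z y" using sub[OF \<open>y > x0\<close>] by (simp add: z_def z2_def algebra_simps)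
    then show ?thesis using m_pos \<open>z y > 0\<close> by (meson mult_pos_pos order_less_le_trans)
  qed
  have "z t \<le> 0"
    by (rule maximum_principle_nonpos[OF cont_z zx0 zT dz dz1 z2_pos \<open>t \<in> {x0..T}\<close>])
  then show ?thesis by (simp add: z_def \<alpha>_def)
qed

lemma exp_decay_of_bounded_subsolution:
  assumes "t \<ge> x0"
  shows "u t \<le> B * exp (- sqrt m * (t - x0))"
proof (rule field_le_epsilon)
  fix e :: real assume "e > 0"
  then show "u t \<le> B * exp (- sqrt m * (t - x0)) + e"
    using subsolution_le_barrier[of "e / exp (sqrt m * (t - x0))" t] assms by simp
qed

end

lemma abs_exp_decay_of_bounded_solution:
  fixes w w1 c :: "real \<Rightarrow> real"
  assumes "m > 0" and cont: "continuous_on {x0..} w"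
    and deriv: "\<And>t. t > x0 \<Longrightarrow> (w has_real_derivative w1 t) (at t)"
    and deriv2: "\<And>t. t > x0 \<Longrightarrow> (w1 has_real_derivative c t * w t) (at t)"
    and c: "\<And>t. t > x0 \<Longrightarrow> c t \<ge> m"
    and bound: "\<And>t. t \<ge> x0 \<Longrightarrow> \<bar>w t\<bar> \<le> B"
    and "t \<ge> x0"
  shows "\<bar>w t\<bar> \<le> B * exp (- sqrt m * (t - x0))"
proof -
  have "B \<ge> 0" using bound[of x0] by simp
  have "w t \<le> B * exp (- sqrt m * (t - x0))"
  proof (rule exp_decay_of_bounded_subsolution[OF \<open>m > 0\<close> \<open>B \<ge> 0\<close> cont deriv deriv2 _ _ \<open>t \<ge> x0\<close>])
    show "w s \<le> B" if "s \<ge> x0" for s using bound[OF that] by simp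
    show "m * w s \<le> c s * w s" if "s > x0" "w s > 0" for s
      using c[of s] that by (simp add: mult_right_mono)
  qed
  moreover have "- w t \<le> B * exp (- sqrt m * (t - x0))"
  proof (rule exp_decay_of_bounded_subsolution[OF \<open>m > 0\<close> \<open>B \<ge> 0\<close> _ DERIV_minus[OF deriv]
        DERIV_minus[OF deriv2] _ _ \<open>t \<ge> x0\<close>])
    show "continuous_on {x0..} (\<lambda>s. - w s)" using cont by (rule continuous_on_minus)
    show "- w s \<le> B" if "s \<ge> x0" for s using bound[OF that] by simp
    show "m * - w s \<le> - (c s * w s)" if "s > x0" "- w s > 0" for s
      using c[of s] that by (simp add: mult_right_mono)
  qed
  ultimately show ?thesis by simp
qed

lemma abs_derivative_le_interpolation:
  fixes w w1 w2 :: "real \<Rightarrow> real"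
  assumes "h > 0"
    and deriv: "\<And>x. x \<in> {t..t+h} \<Longrightarrow> (w has_real_derivative w1 x) (at x)"
    and deriv2: "\<And>x. x \<in> {t..t+h} \<Longrightarrow> (w1 has_real_derivative w2 x) (at x)"
    and bound: "\<And>x. x \<in> {t..t+h} \<Longrightarrow> \<bar>w x\<bar> \<le> A"
    and bound2: "\<And>x. x \<in> {t..t+h} \<Longrightarrow> \<bar>w2 x\<bar> \<le> C"
  shows "\<bar>w1 t\<bar> \<le> 2 * A / h + C * h"
proof -
  obtain s where s: "t < s" "s < t + h" and "w (t + h) - w t = h * w1 s"
    using MVT2[of t "t + h" w w1] deriv \<open>h > 0\<close> by auto
  then have "h * \<bar>w1 s\<bar> \<le> 2 * A"
    using bound[of t] bound[of "t + h"] \<open>h > 0\<close> by (simp add: abs_mult)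
  then have w1s: "\<bar>w1 s\<bar> \<le> 2 * A / h" using \<open>h > 0\<close> by (simp add: field_simps)
  obtain r where r: "t < r" "r < s" and "w1 s - w1 t = (s - t) * w2 r"
    using MVT2[of t s w1 w2] deriv2 s by auto
  moreover have "(s - t) * \<bar>w2 r\<bar> \<le> h * C"
    using bound2[of r] r s by (intro mult_mono) auto
  ultimately have "\<bar>w1 s - w1 t\<bar> \<le> C * h" using r by (simp add: abs_mult mult.commute)
  then show ?thesis using w1s by linarith
qed

lemma period_defect_has_derivative:
  fixes f :: "real \<Rightarrow> real \<Rightarrow> real" and \<phi> \<phi>' :: "real \<Rightarrow> real"
  assumes "L > 0"
    and f_periodic: "\<And>x y. f (x + L) y = f x y"
    and deriv: "\<And>x. x > x0 \<Longrightarrow> (\<phi> has_real_derivative \<phi>' x) (at x)"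
    and deriv2: "\<And>x. x > x0 \<Longrightarrow> (\<phi>' has_real_derivative f x (\<phi> x)) (at x)"
    and "t > x0"
  shows "((\<lambda>s. \<phi> (s + L) - \<phi> s) has_real_derivative \<phi>' (t + L) - \<phi>' t) (at t)"
    and "((\<lambda>s. \<phi>' (s + L) - \<phi>' s) has_real_derivative f t (\<phi> (t + L)) - f t (\<phi> t)) (at t)"
proof -
  have "t + L > x0" using assms(1,5) by simp
  then have "((\<lambda>s. \<phi> (s + L)) has_real_derivative \<phi>' (t + L)) (at t)"
    and "((\<lambda>s. \<phi>' (s + L)) has_real_derivative f t (\<phi> (t + L))) (at t)"
    using deriv[of "t + L"] deriv2[of "t + L"] by (simp_all add: DERIV_shift f_periodic)
  then show "((\<lambda>s. \<phi> (s + L) - \<phi> s) has_real_derivative \<phi>' (t + L) - \<phi>' t) (at t)"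
    and "((\<lambda>s. \<phi>' (s + L) - \<phi>' s) has_real_derivative f t (\<phi> (t + L)) - f t (\<phi> t)) (at t)"
    using deriv[OF \<open>t > x0\<close>] deriv2[OF \<open>t > x0\<close>] by (auto intro: DERIV_diff)
qed

lemma period_defect_decay:
  fixes f :: "real \<Rightarrow> real \<Rightarrow> real" and \<phi> \<phi>' :: "real \<Rightarrow> real"
  assumes "L > 0" "m > 0"
    and f_periodic: "\<And>x y. f (x + L) y = f x y"
    and quotient: "\<And>x y1 y2. y1 \<in> {a..b} \<Longrightarrow> y2 \<in> {a..b} \<Longrightarrow>
                     \<exists>c. m \<le> c \<and> c \<le> M \<and> f x y1 - f x y2 = c * (y1 - y2)"
    and cont: "continuous_on {x0..} \<phi>"
    and deriv: "\<And>x. x > x0 \<Longrightarrow> (\<phi> has_real_derivative \<phi>' x) (at x)"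
    and deriv2: "\<And>x. x > x0 \<Longrightarrow> (\<phi>' has_real_derivative f x (\<phi> x)) (at x)"
    and range: "\<And>x. x \<ge> x0 \<Longrightarrow> \<phi> x \<in> {a..b}"
    and "t > x0"
  shows "\<bar>\<phi> (t + L) - \<phi> t\<bar> \<le> (b - a) * exp (- sqrt m * (t - x0))"
    and "\<bar>\<phi>' (t + L) - \<phi>' t\<bar> \<le> (2 + M) * (b - a) * exp (- sqrt m * (t - x0))"
proof -
  define E where "E s = exp (- sqrt m * (s - x0))" for s
  define w where "w s = \<phi> (s + L) - \<phi> s" for s
  define w1 where "w1 s = \<phi>' (s + L) - \<phi>' s" for s
  have "\<exists>c. m \<le> c \<and> c \<le> M \<and> f s (\<phi> (s + L)) - f s (\<phi> s) = c * w s" if "s \<ge> x0" for s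
    unfolding w_def using quotient range that \<open>L > 0\<close> by simp
  then obtain c where c: "\<And>s. s \<ge> x0 \<Longrightarrow> m \<le> c s \<and> c s \<le> M \<and> f s (\<phi> (s + L)) - f s (\<phi> s) = c s * w s"
    by metis
  have dw: "(w has_real_derivative w1 s) (at s)" "(w1 has_real_derivative c s * w s) (at s)"
    if "s > x0" for s
    using period_defect_has_derivative[OF \<open>L > 0\<close> f_periodic deriv deriv2 that] c[of s] that
    unfolding w_def[abs_def] w1_def[abs_def] by auto
  have "continuous_on {x0..} w"
    unfolding w_def using \<open>L > 0\<close>
    by (auto intro!: continuous_intros continuous_on_compose2[OF cont]
        continuous_on_subset[OF cont])
  moreover have "\<bar>w s\<bar> \<le> b - a" if "s \<ge> x0" for s
    using range[of s] range[of "s + L"] that \<open>L > 0\<close> by (auto simp: w_def)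
  ultimately have w_bound: "\<bar>w s\<bar> \<le> (b - a) * E s" if "s \<ge> x0" for s
    unfolding E_def using abs_exp_decay_of_bounded_solution[OF \<open>m > 0\<close> _ dw(1) dw(2)] c that by auto
  then show "\<bar>\<phi> (t + L) - \<phi> t\<bar> \<le> (b - a) * exp (- sqrt m * (t - x0))"
    using \<open>t > x0\<close> by (simp add: w_def E_def)
  have "\<bar>w1 t\<bar> \<le> 2 * ((b - a) * E t) / 1 + (M * ((b - a) * E t)) * 1"
  proof (rule abs_derivative_le_interpolation
      [where w = w and ?w1.0 = w1 and ?w2.0 = "\<lambda>s. c s * w s"])
    fix s assume s: "s \<in> {t..t + 1}"
    then show "(w has_real_derivative w1 s) (at s)" "(w1 has_real_derivative c s * w s) (at s)"
      using dw \<open>t > x0\<close> by auto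
    have "E s \<le> E t" unfolding E_def using s \<open>m > 0\<close> by (simp add: mult_left_mono)
    then show w_le: "\<bar>w s\<bar> \<le> (b - a) * E t"
      using w_bound[of s] range[of x0] s \<open>t > x0\<close> by (smt (verit) atLeastAtMost_iff mult_left_mono)
    have "m \<le> c s" "c s \<le> M" using c[of s] s \<open>t > x0\<close> by auto
    then show "\<bar>c s * w s\<bar> \<le> M * ((b - a) * E t)"
      using w_le \<open>m > 0\<close> by (simp add: abs_mult mult_mono)
  qed simp
  then show "\<bar>\<phi>' (t + L) - \<phi>' t\<bar> \<le> (2 + M) * (b - a) * exp (- sqrt m * (t - x0))"
    by (simp add: w1_def E_def algebra_simps)
qed

section \<open>The periodic limit\<close>

definition periodic_limit :: "real \<Rightarrow> (real \<Rightarrow> real) \<Rightarrow> real \<Rightarrow> real" where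
  "periodic_limit L \<rho> x = lim (\<lambda>n. \<rho> (x + real n * L))"

lemma periodic_limit_periodic: "periodic_limit L \<rho> (x + L) = periodic_limit L \<rho> x"
proof -
  have "(\<lambda>n. \<rho> (x + L + real n * L)) = (\<lambda>n. \<rho> (x + real (Suc n) * L))"
    by (simp add: algebra_simps)
  then show ?thesis
    unfolding periodic_limit_def lim_def
    using filterlim_sequentially_Suc[of "\<lambda>n. \<rho> (x + real n * L)"] by simp
qed

lemma periodic_limit_approx:
  assumes "L > 0" "k > 0"
    and defect: "\<And>t. t > x0 \<Longrightarrow> \<bar>\<rho> (t + L) - \<rho> t\<bar> \<le> C * exp (- k * (t - x0))"
    and "t > x0"
  shows "(\<lambda>n. \<rho> (t + real n * L)) \<longlonglongrightarrow> periodic_limit L \<rho> t"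
    and "\<bar>periodic_limit L \<rho> t - \<rho> t\<bar> \<le> C / (1 - exp (- k * L)) * exp (- k * (t - x0))"
proof -
  define q where "q = exp (- k * L)"
  have q: "0 \<le> q" "q < 1" using assms(1,2) by (auto simp: q_def)
  have "\<bar>\<rho> (t + real (Suc j) * L) - \<rho> (t + real j * L)\<bar> \<le> C * exp (- k * (t - x0)) * q ^ j" for j
  proof -
    have "\<bar>\<rho> (t + real j * L + L) - \<rho> (t + real j * L)\<bar> \<le> C * exp (- k * (t + real j * L - x0))"
    proof (rule defect)
      have "real j * L \<ge> 0" using assms(1) by simp
      then show "t + real j * L > x0" using assms(4) by linarith
    qed
    also have "exp (- k * (t + real j * L - x0)) = exp (- k * (t - x0)) * q ^ j"
      by (simp add: q_def algebra_simps flip: exp_add exp_of_nat_mult)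
    finally show ?thesis by (simp add: algebra_simps)
  qed
  then obtain l where l: "(\<lambda>n. \<rho> (t + real n * L)) \<longlonglongrightarrow> l"
    and bound: "\<bar>l - \<rho> t\<bar> \<le> C * exp (- k * (t - x0)) / (1 - q)"
    using convergent_geometric_increments[OF q] by fastforce
  have "l = periodic_limit L \<rho> t" unfolding periodic_limit_def using l by (rule limI[symmetric])
  then show "(\<lambda>n. \<rho> (t + real n * L)) \<longlonglongrightarrow> periodic_limit L \<rho> t"
    and "\<bar>periodic_limit L \<rho> t - \<rho> t\<bar> \<le> C / (1 - exp (- k * L)) * exp (- k * (t - x0))"
    using l bound by (simp_all add: q_def)
qed

lemma uniform_limit_periodic_limit:
  assumes "L > 0" "k > 0"
    and defect: "\<And>t. t > x0 \<Longrightarrow> \<bar>\<rho> (t + L) - \<rho> t\<bar> \<le> C * exp (- k * (t - x0))"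
  shows "uniform_limit {x0<..} (\<lambda>n x. \<rho> (x + real n * L)) (periodic_limit L \<rho>) sequentially"
proof (rule uniform_limit_by_null_majorant)
  define q where "q = exp (- k * L)"
  define D where "D = C / (1 - q)"
  have q: "0 \<le> q" "q < 1" using assms(1,2) by (auto simp: q_def)
  have "0 \<le> C * exp (- k * (x0 + 1 - x0))" using defect[of "x0 + 1"] by linarith
  then have "D \<ge> 0" using q by (simp add: D_def zero_le_mult_iff)
  show "dist (\<rho> (x + real n * L)) (periodic_limit L \<rho> x) \<le> D * q ^ n" if "x \<in> {x0<..}" for n x
  proof -
    have "real n * L \<ge> 0" using assms(1) by simp
    then have "periodic_limit L \<rho> x = periodic_limit L \<rho> (x + real n * L)"
      using periodic_add_int_mult[where g="periodic_limit L \<rho>", OF periodic_limit_periodic,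
          of x "int n"]
      by simp
    also have "\<bar>\<dots> - \<rho> (x + real n * L)\<bar> \<le> D * exp (- k * (x + real n * L - x0))"
      using periodic_limit_approx(2)[OF assms, of "x + real n * L"] that \<open>real n * L \<ge> 0\<close>
      by (simp add: D_def q_def)
    also have "\<dots> \<le> D * exp (- k * (real n * L))"
      using that assms(2) \<open>D \<ge> 0\<close> by (intro mult_left_mono) auto
    also have "\<dots> = D * q ^ n"
      by (simp add: q_def algebra_simps flip: exp_of_nat_mult)
    finally show ?thesis by (simp add: dist_real_def abs_minus_commute)
  qed
  show "(\<lambda>n. D * q ^ n) \<longlonglongrightarrow> 0"
    using q by (intro tendsto_mult_right_zero LIMSEQ_power_zero) auto
qed

lemma periodic_limit_asymptotic:
  assumes "L > 0" "k > 0"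
    and defect: "\<And>t. t > x0 \<Longrightarrow> \<bar>\<rho> (t + L) - \<rho> t\<bar> \<le> C * exp (- k * (t - x0))"
  shows "((\<lambda>t. \<rho> t - periodic_limit L \<rho> t) \<longlongrightarrow> 0) at_top"
proof (rule Lim_null_comparison)
  show "\<forall>\<^sub>F t in at_top.
      norm (\<rho> t - periodic_limit L \<rho> t) \<le> C / (1 - exp (- k * L)) * exp (- k * (t - x0))"
    using eventually_gt_at_top[of x0]
    by eventually_elim (use periodic_limit_approx(2)[OF assms] in \<open>simp add: abs_minus_commute\<close>)
  have "filterlim (\<lambda>t. - x0 + t) at_top at_top"
    by (rule filterlim_tendsto_add_at_top[OF tendsto_const filterlim_ident])
  then have "filterlim (\<lambda>t. - k * (- x0 + t)) at_bot at_top"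
    using \<open>k > 0\<close> by (intro filterlim_tendsto_neg_mult_at_bot[OF tendsto_const]) auto
  then have "((\<lambda>t. exp (- k * (t - x0))) \<longlongrightarrow> 0) at_top"
    using filterlim_compose[OF exp_at_bot] by simp
  then show "((\<lambda>t. C / (1 - exp (- k * L)) * exp (- k * (t - x0))) \<longlongrightarrow> 0) at_top"
    by (rule tendsto_mult_right_zero)
qed

lemma periodic_limit_solution:
  fixes f :: "real \<Rightarrow> real \<Rightarrow> real" and \<phi> \<phi>' :: "real \<Rightarrow> real"
  assumes "L > 0" "k > 0"
    and f_periodic: "\<And>x y. f (x + L) y = f x y"
    and lipschitz: "\<And>x y1 y2. y1 \<in> {a..b} \<Longrightarrow> y2 \<in> {a..b} \<Longrightarrow> \<bar>f x y1 - f x y2\<bar> \<le> M * \<bar>y1 - y2\<bar>"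
    and deriv: "\<And>x. x > x0 \<Longrightarrow> (\<phi> has_real_derivative \<phi>' x) (at x)"
    and deriv2: "\<And>x. x > x0 \<Longrightarrow> (\<phi>' has_real_derivative f x (\<phi> x)) (at x)"
    and range: "\<And>x. x > x0 \<Longrightarrow> \<phi> x \<in> {a..b}"
    and defect: "\<And>t. t > x0 \<Longrightarrow> \<bar>\<phi> (t + L) - \<phi> t\<bar> \<le> C * exp (- k * (t - x0))"
    and defect': "\<And>t. t > x0 \<Longrightarrow> \<bar>\<phi>' (t + L) - \<phi>' t\<bar> \<le> C' * exp (- k * (t - x0))"
    and "x > x0"
  shows "(periodic_limit L \<phi> has_real_derivative periodic_limit L \<phi>' x) (at x)"
    and "(periodic_limit L \<phi>' has_real_derivative f x (periodic_limit L \<phi> x)) (at x)"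
proof -
  let ?\<psi> = "periodic_limit L \<phi>" and ?\<psi>' = "periodic_limit L \<phi>'"
  have shift_pos: "y + real n * L > x0" if "y > x0" for y n
  proof -
    have "real n * L \<ge> 0" using \<open>L > 0\<close> by simp
    then show ?thesis using that by linarith
  qed
  have f_shift: "f (y + real n * L) z = f y z" for y z n
    using periodic_add_int_mult[where g = "\<lambda>x. f x z", OF f_periodic, of y "int n"] by simp
  have lim: "(\<lambda>n. \<phi> (y + real n * L)) \<longlonglongrightarrow> ?\<psi> y" "(\<lambda>n. \<phi>' (y + real n * L)) \<longlonglongrightarrow> ?\<psi>' y"
    if "y > x0" for y
    using periodic_limit_approx(1)[OF assms(1,2) defect that]
      periodic_limit_approx(1)[OF assms(1,2) defect' that] by auto
  have psi_range: "?\<psi> y \<in> {a..b}" if "y > x0" for y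
    using closed_atLeastAtMost range[OF shift_pos[OF that]] lim(1)[OF that]
    by (rule closed_sequentially)
  show "(?\<psi> has_real_derivative ?\<psi>' x) (at x)"
  proof (rule has_real_derivative_uniform_limit[where f = "\<lambda>n y. \<phi> (y + real n * L)"])
    show "((\<lambda>y. \<phi> (y + real n * L)) has_real_derivative \<phi>' (y + real n * L)) (at y)"
      if "y \<in> {x0<..}" for n y
      using deriv[OF shift_pos[of y n]] that by (simp add: DERIV_shift)
  qed (use uniform_limit_periodic_limit[OF assms(1,2) defect'] lim \<open>x > x0\<close> in auto)
  show "(?\<psi>' has_real_derivative f x (?\<psi> x)) (at x)"
  proof (rule has_real_derivative_uniform_limit[where f = "\<lambda>n y. \<phi>' (y + real n * L)"])
    show "((\<lambda>y. \<phi>' (y + real n * L)) has_real_derivative f y (\<phi> (y + real n * L))) (at y)"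
      if "y \<in> {x0<..}" for n y
      using deriv2[OF shift_pos[of y n]] that by (simp add: DERIV_shift f_shift)
    show "uniform_limit {x0<..} (\<lambda>n y. f y (\<phi> (y + real n * L))) (\<lambda>y. f y (?\<psi> y)) sequentially"
      by (rule uniform_limit_lipschitz_compose
            [OF uniform_limit_periodic_limit[OF assms(1,2) defect],
            where Y = "{a..b}" and M = M])
        (use lipschitz range shift_pos psi_range in \<open>auto simp: dist_real_def\<close>)
  qed (use lim \<open>x > x0\<close> in auto)
qed

lemma asymptotically_periodic_solution:
  fixes f :: "real \<Rightarrow> real \<Rightarrow> real" and \<phi> \<phi>' :: "real \<Rightarrow> real"
  assumes "L > 0" "m > 0"
    and f_periodic: "\<And>x y. f (x + L) y = f x y"
    and quotient: "\<And>x y1 y2. y1 \<in> {a..b} \<Longrightarrow> y2 \<in> {a..b} \<Longrightarrow>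
                     \<exists>c. m \<le> c \<and> c \<le> M \<and> f x y1 - f x y2 = c * (y1 - y2)"
    and cont: "continuous_on {x0..} \<phi>"
    and deriv: "\<And>x. x > x0 \<Longrightarrow> (\<phi> has_real_derivative \<phi>' x) (at x)"
    and deriv2: "\<And>x. x > x0 \<Longrightarrow> (\<phi>' has_real_derivative f x (\<phi> x)) (at x)"
    and range: "\<And>x. x \<ge> x0 \<Longrightarrow> \<phi> x \<in> {a..b}"
  shows "\<exists>\<psi> \<psi>'. (\<forall>x. \<psi> (x + L) = \<psi> x)
           \<and> (\<forall>x. (\<psi> has_real_derivative \<psi>' x) (at x))
           \<and> (\<forall>x. (\<psi>' has_real_derivative f x (\<psi> x)) (at x))
           \<and> ((\<lambda>x. \<bar>\<phi> x - \<psi> x\<bar> + \<bar>\<phi>' x - \<psi>' x\<bar>) \<longlongrightarrow> 0) at_top"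
proof -
  have lipschitz: "\<bar>f x y1 - f x y2\<bar> \<le> M * \<bar>y1 - y2\<bar>" if y: "y1 \<in> {a..b}" "y2 \<in> {a..b}" for x y1 y2
  proof -
    obtain c where "m \<le> c" "c \<le> M" "f x y1 - f x y2 = c * (y1 - y2)" using quotient[OF y] by blast
    then show ?thesis using \<open>m > 0\<close> by (simp add: abs_mult mult_right_mono)
  qed
  note decay = period_defect_decay[OF assms]
  have k: "sqrt m > 0" using \<open>m > 0\<close> by simp
  note solution = periodic_limit_solution[OF \<open>L > 0\<close> k f_periodic lipschitz deriv deriv2 _ decay]
  let ?\<psi> = "periodic_limit L \<phi>" and ?\<psi>' = "periodic_limit L \<phi>'"
  have "(?\<psi> has_real_derivative ?\<psi>' x) (at x)" for x
    by (rule periodic_has_real_derivative[OF \<open>L > 0\<close> periodic_limit_periodic periodic_limit_periodic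
          solution(1)]) (use range in auto)
  moreover have "(?\<psi>' has_real_derivative f x (?\<psi> x)) (at x)" for x
    by (rule periodic_has_real_derivative[OF \<open>L > 0\<close> periodic_limit_periodic _ solution(2)])
      (use range in \<open>auto simp: f_periodic periodic_limit_periodic\<close>)
  moreover have "((\<lambda>x. \<bar>\<phi> x - ?\<psi> x\<bar> + \<bar>\<phi>' x - ?\<psi>' x\<bar>) \<longlongrightarrow> 0) at_top"
    using periodic_limit_asymptotic[OF \<open>L > 0\<close> k decay(1)]
      periodic_limit_asymptotic[OF \<open>L > 0\<close> k decay(2)]
    by (auto intro: tendsto_add_zero tendsto_rabs_zero)
  ultimately show ?thesis by (intro exI[of _ ?\<psi>] exI[of _ ?\<psi>']) (auto simp: periodic_limit_periodic)
qed

theorem theorem1: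
  fixes L x0 :: real
    and f fy :: "real \<Rightarrow> real \<Rightarrow> real"
    and \<phi> \<phi>' :: "real \<Rightarrow> real"
  assumes L_pos: "L > 0"
    and f_cont: "continuous_on UNIV (\<lambda>(x, y). f x y)"
    and f_periodic: "\<forall>x y. f (x + L) y = f x y"
    and f_deriv_y: "\<forall>x y. ((\<lambda>y. f x y) has_real_derivative fy x y) (at y)"
    and fy_cont: "continuous_on UNIV (\<lambda>(x, y). fy x y)"
    and phi_deriv: "\<forall>x \<ge> x0. (\<phi> has_real_derivative \<phi>' x) (at x within {x0..})"
    and phi_deriv2: "\<forall>x \<ge> x0. (\<phi>' has_real_derivative f x (\<phi> x)) (at x within {x0..})"
    and phi_bounded: "bounded (\<phi> ` {x0..})"
    and min_pos: "(INF p \<in> {0..L} \<times> {Inf (\<phi> ` {x0..}) .. Sup (\<phi> ` {x0..})}. fy (fst p) (snd p)) > 0"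
  shows "\<exists>\<psi> \<psi>' :: real \<Rightarrow> real.
           (\<forall>x. \<psi> (x + L) = \<psi> x)
         \<and> (\<forall>x. (\<psi> has_real_derivative \<psi>' x) (at x))
         \<and> (\<forall>x. (\<psi>' has_real_derivative f x (\<psi> x)) (at x))
         \<and> ((\<lambda>x. \<bar>\<phi> x - \<psi> x\<bar> + \<bar>\<phi>' x - \<psi>' x\<bar>) \<longlongrightarrow> 0) at_top"
proof -
  define a b where "a = Inf (\<phi> ` {x0..})" and "b = Sup (\<phi> ` {x0..})"
  define m M where "m = (INF p \<in> {0..L} \<times> {a..b}. fy (fst p) (snd p))"
    and "M = (SUP p \<in> {0..L} \<times> {a..b}. fy (fst p) (snd p))"
  have "m > 0" using min_pos by (simp add: m_def a_def b_def)
  have range: "\<phi> x \<in> {a..b}" if "x \<ge> x0" for x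
    using that phi_bounded unfolding a_def b_def
    by (auto intro!: cInf_lower cSup_upper bounded_imp_bdd_below bounded_imp_bdd_above)
  have quotient: "\<exists>c. m \<le> c \<and> c \<le> M \<and> f x y1 - f x y2 = c * (y1 - y2)"
    if "y1 \<in> {a..b}" "y2 \<in> {a..b}" for x y1 y2
    unfolding m_def M_def using f_periodic f_deriv_y
    by (intro difference_quotient_bounds_periodic[OF L_pos _ _ fy_cont that]) auto
  have deriv: "(\<phi> has_real_derivative \<phi>' x) (at x)" "(\<phi>' has_real_derivative f x (\<phi> x)) (at x)"
    if "x > x0" for x
    using phi_deriv[rule_format, of x] phi_deriv2[rule_format, of x] that
      at_within_interior[of x "{x0..}"]
    by (simp_all add: interior_real_atLeast)
  have "continuous_on {x0..} \<phi>"
    using phi_deriv by (auto intro: DERIV_continuous_on)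
  then show ?thesis
    using asymptotically_periodic_solution[OF L_pos \<open>m > 0\<close> _ quotient _ deriv range] f_periodic
    by auto
qed

end
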